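(* Let $n$ be large, let $d$ satisfy $10\le d\le 10\log n$, and let $G$ be a graph on $n$ vertices (e.g. a realisation of $G(n,d/n)$) satisfying the following properties: (i) $G$ has at most $dn$ edges; (ii) $|\Gamma_i(x,G)|\le (2d)^i\log n$ for every $x\in V(G)$ and $i\le n$; (iii) every set of $i\le\sqrt{n}$ vertices spans at most $2i$ edges, and every set of $i\le 10\log\log n$ vertices spans at most $i$ edges; (iv) for every subgraph $G'$ of $G$ with minimum degree at least $10$, $|\Gamma_i(x,G')|\ge 2^i$ for every $x\in V(G')$ and $1\le i\le 10\log\log n$; (v) with $l=3\log\log n$: for every subgraph $G'$ of $G$ obtained by deleting at most $20d\log n$ vertices and edges and every $x,y\in V(G')$ with $|B_l(x,G')|,|B_l(y,G')|\ge(\log n)^3$, there is a path of length at most $2\log n$ between $x$ and $y$ in $G'$. Let $H$ be the $15$-core of $G$. Let $S_1,\dots,S_d$ be vertex-disjoint paths of length at most $d$ in $H$, let $l=3\log\log n$, and assume that $B_l(x,G)\cap B_l(y,G)=\emptyset$ for every $x\in V(S_i)$, $y\in V(S_j)$ with $i\ne j$. For each $i$ select an edge $e_i=x_iy_i$ of $S_i$ and set $M=\{e_1,\dots,e_d\}$. Then there exists a path in $G$ containing all the edges of $M$ and no other edge of $\bigcup_{1\le i\le d}E(S_i)$.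
   Context: For a graph $F$, a vertex $v$ and integer $i\ge0$, $B_i(v,F)$ is the set of vertices at distance at most $i$ from $v$ in $F$ and $\Gamma_i(v,F)=B_i(v,F)\setminus B_{i-1}(v,F)$. The $k$-core of a graph is its largest induced subgraph with minimum degree at least $k$. Floors and ceilings are omitted, so $d$ and $l$ are treated as integers. *)

theory Defs
  imports Complex_Main
begin

definition is_graph :: "nat set \<Rightarrow> nat set set \<Rightarrow> bool" where
  "is_graph V E \<longleftrightarrow> finite V \<and> (\<forall>e\<in>E. \<exists>u v. u \<noteq> v \<and> u \<in> V \<and> v \<in> V \<and> e = {u, v})"

definition is_path :: "nat set \<Rightarrow> nat set set \<Rightarrow> nat list \<Rightarrow> bool" where
  "is_path V E p \<longleftrightarrow> p \<noteq> [] \<and> distinct p \<and> set p \<subseteq> V \<and>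
     (\<forall>k. Suc k < length p \<longrightarrow> {p ! k, p ! Suc k} \<in> E)"

definition plen :: "nat list \<Rightarrow> nat" where
  "plen p = length p - 1"

definition path_edges :: "nat list \<Rightarrow> nat set set" where
  "path_edges p = {{p ! k, p ! Suc k} | k. Suc k < length p}"

definition ball :: "nat set \<Rightarrow> nat set set \<Rightarrow> nat \<Rightarrow> nat \<Rightarrow> nat set" where
  "ball V E v i = {u. \<exists>p. is_path V E p \<and> hd p = v \<and> last p = u \<and> plen p \<le> i}"

definition sphere :: "nat set \<Rightarrow> nat set set \<Rightarrow> nat \<Rightarrow> nat \<Rightarrow> nat set" where
  "sphere V E v i = ball V E v i - (if i = 0 then {} else ball V E v (i - 1))"

definition degree :: "nat set set \<Rightarrow> nat \<Rightarrow> nat" where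
  "degree E v = card {e \<in> E. v \<in> e}"

definition min_deg_ge :: "nat set \<Rightarrow> nat set set \<Rightarrow> nat \<Rightarrow> bool" where
  "min_deg_ge V E k \<longleftrightarrow> (\<forall>v\<in>V. k \<le> degree E v)"

definition induced :: "nat set set \<Rightarrow> nat set \<Rightarrow> nat set set" where
  "induced E U = {e \<in> E. e \<subseteq> U}"

definition spans :: "nat set set \<Rightarrow> nat set \<Rightarrow> nat" where
  "spans E U = card {e \<in> E. e \<subseteq> U}"

definition subgraph :: "nat set \<Rightarrow> nat set set \<Rightarrow> nat set \<Rightarrow> nat set set \<Rightarrow> bool" where
  "subgraph V' E' V E \<longleftrightarrow> V' \<subseteq> V \<and> E' \<subseteq> E \<and> (\<forall>e\<in>E'. e \<subseteq> V')"

text \<open>Vertex set of the k-core: the largest vertex set inducing a subgraph of minimum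
  degree at least k (the union of all such sets, which again has this property).\<close>
definition core_vertices :: "nat set \<Rightarrow> nat set set \<Rightarrow> nat \<Rightarrow> nat set" where
  "core_vertices V E k = \<Union>{W. W \<subseteq> V \<and> min_deg_ge W (induced E W) k}"

definition lpar :: "nat \<Rightarrow> nat" where
  "lpar n = nat \<lfloor>3 * ln (ln (real n))\<rfloor>"

end

theory Submission
  imports Defs "HOL-Real_Asymp.Real_Asymp"
begin

text \<open>Let \<open>H\<close> be the 15-core and call an edge of \<open>H\<close> free if it lies on no \<open>S\<^sub>i\<close>; every
  vertex of \<open>H\<close> keeps at least 13 free edges. The path is built greedily, one edge \<open>e\<^sub>i\<close> at a
  time. Having arrived at an endpoint \<open>z\<close> of \<open>e\<^sub>j\<close>, delete the other vertices used so far and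
  all edges of the \<open>S\<^sub>i\<close>. In what is left of \<open>H\<close>, balls of free edges around \<open>z\<close> and around
  an endpoint of an unused \<open>e\<^sub>i\<close> grow by a factor 4 per radius step up to radius
  \<open>l = 3 log log n\<close>: the free edges at a ball lie in the next ball together with the short path
  by which the neighbourhood of \<open>z\<close> was entered, and sparseness of small sets (iii) forbids
  that unless the next ball is much larger. So both balls have \<open>(log n)\<^sup>3\<close> vertices and
  (v) gives a connecting path of length at most \<open>2 log n\<close>. It is cut at its first vertex \<open>w\<close>
  in the \<open>l\<close>-neighbourhood of an unused \<open>e\<^sub>k\<close>; a shortest free path from \<open>e\<^sub>k\<close> to \<open>w\<close>,
  followed by \<open>e\<^sub>k\<close>, completes the step. These neighbourhoods are pairwise disjoint, so no
  other edge of an \<open>S\<^sub>i\<close> is ever used, and at most \<open>d (2 log n + l + 2) + d\<^sup>2 \<le> 20 d log n\<close>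
  vertices and edges are deleted.\<close>

lemma is_path_singleton [simp]: "is_path V E [a] \<longleftrightarrow> a \<in> V"
  unfolding is_path_def by auto

lemma is_path_Cons_Cons:
  "is_path V E (a # b # xs) \<longleftrightarrow>
     a \<in> V \<and> a \<notin> set (b # xs) \<and> {a, b} \<in> E \<and> is_path V E (b # xs)"
proof -
  have "(\<forall>k. Suc k < length (a # b # xs) \<longrightarrow> {(a # b # xs) ! k, (a # b # xs) ! Suc k} \<in> E)
    \<longleftrightarrow> {a, b} \<in> E \<and> (\<forall>k. Suc k < length (b # xs) \<longrightarrow> {(b # xs) ! k, (b # xs) ! Suc k} \<in> E)"
    using All_less_Suc2[where P = "\<lambda>k. {(a # b # xs) ! k, (a # b # xs) ! Suc k} \<in> E"]
    by (simp del: All_less_Suc2)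
  then show ?thesis
    unfolding is_path_def by auto
qed

lemma path_edges_Nil [simp]: "path_edges [] = {}"
  and path_edges_singleton [simp]: "path_edges [a] = {}"
  unfolding path_edges_def by auto

lemma path_edges_Cons_Cons: "path_edges (a # b # xs) = insert {a, b} (path_edges (b # xs))"
proof -
  have split_nat: "(\<exists>k. P k) \<longleftrightarrow> P 0 \<or> (\<exists>k. P (Suc k))" for P :: "nat \<Rightarrow> bool"
    by (metis not0_implies_Suc)
  show ?thesis
    unfolding path_edges_def by (subst split_nat) auto
qed

lemma finite_path_edges [simp]: "finite (path_edges p)"
proof -
  have "path_edges p = (\<lambda>k. {p ! k, p ! Suc k}) ` {k. Suc k < length p}"
    unfolding path_edges_def by auto
  moreover have "{k. Suc k < length p} \<subseteq> {..<length p}"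
    by auto
  ultimately show ?thesis
    by (metis finite_imageI finite_lessThan finite_subset)
qed

lemma path_edge_subset_set: "f \<in> path_edges p \<Longrightarrow> f \<subseteq> set p"
  unfolding path_edges_def by auto

lemma is_path_nonempty: "is_path V E p \<Longrightarrow> p \<noteq> []"
  and is_path_distinct: "is_path V E p \<Longrightarrow> distinct p"
  and is_path_subset: "is_path V E p \<Longrightarrow> set p \<subseteq> V"
  and path_edges_subset: "is_path V E p \<Longrightarrow> path_edges p \<subseteq> E"
  unfolding is_path_def path_edges_def by auto

lemma is_path_mono: "is_path V' E' p \<Longrightarrow> V' \<subseteq> V \<Longrightarrow> E' \<subseteq> E \<Longrightarrow> is_path V E p"
  unfolding is_path_def by auto

lemma card_path_edges: "is_path V E p \<Longrightarrow> card (path_edges p) = length p - 1"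
proof (induction p rule: induct_list012)
  case (3 a b xs)
  then have "{a, b} \<notin> path_edges (b # xs)"
    using path_edge_subset_set by (fastforce simp: is_path_Cons_Cons)
  with 3 show ?case
    by (simp add: path_edges_Cons_Cons is_path_Cons_Cons)
qed simp_all

lemma card_incident_path_edges:
  "distinct p \<Longrightarrow> card {f \<in> path_edges p. v \<in> f} \<le> (if v = hd p then 1 else 2)"
proof (induction p rule: induct_list012)
  case (3 a b xs)
  have "a \<notin> set (b # xs)"
    using "3.prems" by simp
  then have no_a: "{f \<in> path_edges (b # xs). a \<in> f} = {}"
    using path_edge_subset_set by blast
  have "{f \<in> path_edges (a # b # xs). v \<in> f} =
      (if v \<in> {a, b} then insert {a, b} {f \<in> path_edges (b # xs). v \<in> f}
       else {f \<in> path_edges (b # xs). v \<in> f})"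
    by (auto simp: path_edges_Cons_Cons)
  with no_a "3.IH"(2) "3.prems" show ?case
    by (auto simp: card_insert_if split: if_splits)
qed simp_all

lemma path_edges_join:
  "p \<noteq> [] \<Longrightarrow> last p = hd q \<Longrightarrow> path_edges (p @ tl q) = path_edges p \<union> path_edges q"
proof (induction p rule: induct_list012)
  case (2 a)
  then show ?case
    by (cases q) (auto simp: path_edges_def)
next
  case (3 a b xs)
  then show ?case
    by (simp add: path_edges_Cons_Cons Un_insert_left)
qed simp

lemma is_path_join:
  assumes "is_path V E p" "is_path V E q" "last p = hd q" "set p \<inter> set q \<subseteq> {hd q}"
  shows "is_path V E (p @ tl q)"
  using assms
proof (induction p rule: induct_list012)
  case (2 a)
  then show ?case
    using is_path_nonempty by (cases q) auto
next
  case (3 a b xs)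
  have "last (b # xs) \<in> set (b # xs)"
    by (rule last_in_set) simp
  then have "hd q \<noteq> a"
    using "3.prems"(1,3) by (auto simp: is_path_Cons_Cons)
  then have "a \<notin> set (tl q)"
    using "3.prems"(4) by (cases q) auto
  with 3 show ?case
    by (auto simp: is_path_Cons_Cons)
qed (simp add: is_path_def)

lemma set_join: "p \<noteq> [] \<Longrightarrow> q \<noteq> [] \<Longrightarrow> last p = hd q \<Longrightarrow> set (p @ tl q) = set p \<union> set q"
  by (cases q) (auto dest: last_in_set)

lemma last_join: "p \<noteq> [] \<Longrightarrow> q \<noteq> [] \<Longrightarrow> last p = hd q \<Longrightarrow> last (p @ tl q) = last q"
  by (cases q) auto

lemma is_path_take: "is_path V E p \<Longrightarrow> 0 < m \<Longrightarrow> is_path V E (take m p)"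
  unfolding is_path_def by (auto dest: in_set_takeD)

lemma is_path_rev: "is_path V E p \<Longrightarrow> is_path V E (rev p)"
proof (induction p rule: induct_list012)
  case (3 a b xs)
  then have "is_path V E (rev (b # xs))"
    by (simp add: is_path_Cons_Cons)
  moreover have "is_path V E [b, a]"
    using "3.prems" is_path_subset by (fastforce simp: is_path_Cons_Cons insert_commute)
  moreover have "set (rev (b # xs)) \<inter> set [b, a] \<subseteq> {b}"
    using "3.prems" by (auto simp: is_path_Cons_Cons)
  ultimately have "is_path V E (rev (b # xs) @ tl [b, a])"
    by (intro is_path_join) auto
  then show ?case
    by simp
qed simp_all

lemma path_edges_rev [simp]: "path_edges (rev p) = path_edges p"
proof (induction p rule: induct_list012)
  case (3 a b xs)
  have "path_edges (rev (b # xs) @ tl [b, a]) = path_edges (rev (b # xs)) \<union> path_edges [b, a]"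
    by (rule path_edges_join) auto
  with 3 show ?case
    by (auto simp: path_edges_Cons_Cons insert_commute)
qed simp_all

lemma path_prefix_first_hit:
  assumes "is_path V E p" "last p \<in> A"
  shows "\<exists>R. is_path V E R \<and> hd R = hd p \<and> last R \<in> A \<and> (\<forall>v\<in>set R. v \<in> A \<longrightarrow> v = last R) \<and>
    set R \<subseteq> set p \<and> length R \<le> length p"
  using assms
proof (induction p)
  case (Cons a xs)
  show ?case
  proof (cases "a \<in> A")
    case True
    with Cons.prems show ?thesis
      by (intro exI[of _ "[a]"]) (auto simp: is_path_def)
  next
    case False
    with Cons.prems obtain b ys where xs: "xs = b # ys"
      by (cases xs) auto
    with Cons.prems have "is_path V E xs" "last xs \<in> A"
      by (auto simp: is_path_Cons_Cons)
    with Cons.IH obtain R where R: "is_path V E R" "hd R = b" "last R \<in> A"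
      "\<forall>v\<in>set R. v \<in> A \<longrightarrow> v = last R" "set R \<subseteq> set xs" "length R \<le> length xs"
      using xs by auto
    then obtain R' where R': "R = b # R'"
      using is_path_nonempty by (cases R) auto
    have "is_path V E (a # R)"
      using Cons.prems(1) R R' xs by (auto simp: is_path_Cons_Cons)
    then show ?thesis
      using False R R' by (intro exI[of _ "a # R"]) auto
  qed
qed simp

lemma set_path_subset_ball: "is_path V E p \<Longrightarrow> set p \<subseteq> ball V E (hd p) (plen p)"
proof
  fix v
  assume p: "is_path V E p" and "v \<in> set p"
  then obtain a where a: "a < length p" "p ! a = v"
    by (auto simp: in_set_conv_nth)
  have "is_path V E (take (Suc a) p)"
    using p by (rule is_path_take) simp
  moreover have "last (take (Suc a) p) = v"
    using a by (simp add: take_Suc_conv_app_nth)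
  moreover have "hd (take (Suc a) p) = hd p" "plen (take (Suc a) p) \<le> plen p"
    using a by (auto simp: plen_def)
  ultimately show "v \<in> ball V E (hd p) (plen p)"
    unfolding ball_def by blast
qed

lemma ball_mono: "V' \<subseteq> V \<Longrightarrow> E' \<subseteq> E \<Longrightarrow> ball V' E' v k \<subseteq> ball V E v k"
  unfolding ball_def using is_path_mono by blast

lemma ball_radius_mono: "k \<le> k' \<Longrightarrow> ball V E v k \<subseteq> ball V E v k'"
  unfolding ball_def by force

lemma center_in_ball: "v \<in> V \<Longrightarrow> v \<in> ball V E v k"
  unfolding ball_def plen_def by (auto intro!: exI[of _ "[v]"])

lemma ball_subset: "ball V E v k \<subseteq> V"
  unfolding ball_def using is_path_subset is_path_nonempty last_in_set by fastforce

lemma finite_ball: "finite V \<Longrightarrow> finite (ball V E v k)"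
  using ball_subset finite_subset by metis

lemma ball_Suc_neighbour:
  assumes u: "u \<in> ball V E v k" and "{u, w} \<in> E" "w \<in> V"
  shows "w \<in> ball V E v (Suc k)"
proof -
  obtain p where p: "is_path V E p" "hd p = v" "last p = u" "plen p \<le> k"
    using u unfolding ball_def by auto
  show ?thesis
  proof (cases "w \<in> set p")
    case True
    then show ?thesis
      using set_path_subset_ball[OF p(1)] ball_radius_mono[of "plen p" "Suc k" V E v] p by auto
  next
    case False
    have "u \<in> V"
      using u ball_subset by blast
    with assms p False have "is_path V E [u, w]"
      using last_in_set[OF is_path_nonempty[OF p(1)]] by (auto simp: is_path_Cons_Cons)
    with p False have "is_path V E (p @ tl [u, w])"
      by (intro is_path_join) auto
    moreover have "plen (p @ tl [u, w]) \<le> Suc k"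
      using p by (simp add: plen_def)
    ultimately show ?thesis
      using p is_path_nonempty unfolding ball_def by fastforce
  qed
qed

lemma path_from_nearest:
  assumes "w \<in> ball V E a k" "a \<in> A"
  obtains q where "is_path V E q" "hd q \<in> A" "last q = w" "plen q \<le> k"
    "\<forall>v\<in>set q. v \<in> A \<longrightarrow> v = hd q"
proof -
  obtain p where p: "is_path V E p" "hd p = a" "last p = w" "plen p \<le> k"
    using assms(1) unfolding ball_def by auto
  have "is_path V E (rev p)" "last (rev p) \<in> A"
    using p assms(2) is_path_nonempty by (auto simp: is_path_rev last_rev)
  then obtain R where R: "is_path V E R" "hd R = hd (rev p)" "last R \<in> A"
    "\<forall>v\<in>set R. v \<in> A \<longrightarrow> v = last R" "length R \<le> length (rev p)"
    by (meson path_prefix_first_hit)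
  have "R \<noteq> []" "p \<noteq> []"
    using R(1) p(1) is_path_nonempty by auto
  with R p show ?thesis
    by (intro that[of "rev R"]) (auto simp: is_path_rev hd_rev last_rev plen_def)
qed

lemma sum_card_incident:
  assumes "finite A" "finite B"
  shows "(\<Sum>a\<in>A. card {b\<in>B. a \<in> b}) = (\<Sum>b\<in>B. card (b \<inter> A))"
proof -
  have "card {b\<in>B. a \<in> b} = (\<Sum>b\<in>B. if a \<in> b then 1 else 0)" for a
    using assms(2) by (simp add: sum.inter_filter[symmetric])
  moreover have "card (b \<inter> A) = (\<Sum>a\<in>A. if a \<in> b then 1 else 0)" for b :: "'a set"
    using assms(1) by (simp add: sum.inter_filter[symmetric] Int_def conj_commute)
  ultimately show ?thesis
    by (simp add: sum.swap[of _ A])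
qed

definition large_enough :: "nat \<Rightarrow> bool" where
  "large_enough n \<longleftrightarrow>
    (ln (real n))^3 \<le> 4 powr (3 * ln (ln (real n)) - 1) \<and>
    (ln (real n))^3 + 3 * ln (ln (real n)) + 2 \<le> sqrt (real n) \<and>
    3 * ln (ln (real n)) + 2 \<le> 8 * ln (real n) \<and>
    2 \<le> ln (ln (real n)) \<and> 1 \<le> ln (real n)"

locale lemma4p3_setting =
  fixes n d :: nat and V :: "nat set" and E :: "nat set set"
    and S :: "nat \<Rightarrow> nat list" and e :: "nat \<Rightarrow> nat set"
  assumes graph: "is_graph V E"
    and sparse: "\<forall>U\<subseteq>V. real (card U) \<le> sqrt (real n) \<longrightarrow> spans E U \<le> 2 * card U"
    and very_sparse: "\<forall>U\<subseteq>V. real (card U) \<le> 10 * ln (ln (real n)) \<longrightarrow> spans E U \<le> card U"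
    and connected_after_deletion: "\<forall>X Y. X \<subseteq> V \<and> Y \<subseteq> E \<and> real (card X + card Y) \<le> 20 * real d * ln (real n) \<longrightarrow>
       (\<forall>x\<in>V - X. \<forall>y\<in>V - X.
          (ln (real n)) ^ 3 \<le> real (card (ball (V - X) {f \<in> E - Y. f \<subseteq> V - X} x (lpar n))) \<and>
          (ln (real n)) ^ 3 \<le> real (card (ball (V - X) {f \<in> E - Y. f \<subseteq> V - X} y (lpar n))) \<longrightarrow>
          (\<exists>p. is_path (V - X) {f \<in> E - Y. f \<subseteq> V - X} p \<and> hd p = x \<and> last p = y \<and>
               real (plen p) \<le> 2 * ln (real n)))"
    and S_paths: "\<forall>i<d. is_path (core_vertices V E 15) (induced E (core_vertices V E 15)) (S i) \<and>
             plen (S i) \<le> d"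
    and S_disjoint: "\<forall>i<d. \<forall>j<d. i \<noteq> j \<longrightarrow> set (S i) \<inter> set (S j) = {}"
    and S_balls_disjoint: "\<forall>i<d. \<forall>j<d. i \<noteq> j \<longrightarrow> (\<forall>x\<in>set (S i). \<forall>y\<in>set (S j).
         ball V E x (lpar n) \<inter> ball V E y (lpar n) = {})"
    and e_on_S: "\<forall>i<d. e i \<in> path_edges (S i)"
    and d_pos: "0 < d"
    and d_le: "real d \<le> 10 * ln (real n)"
    and large: "large_enough n"
begin

abbreviation "l \<equiv> lpar n"
abbreviation "L \<equiv> ln (ln (real n))"

lemma ln_cube_le_pow: "(ln (real n))^3 \<le> 4 powr (3 * L - 1)"
  and ln_cube_le_sqrt: "(ln (real n))^3 + 3 * L + 2 \<le> sqrt (real n)"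
  and lnln_le_ln: "3 * L + 2 \<le> 8 * ln (real n)"
  and lnln_ge: "2 \<le> L"
  and ln_ge: "1 \<le> ln (real n)"
  using large unfolding large_enough_def by auto

definition "H = core_vertices V E 15"
definition "ES = (\<Union>i<d. path_edges (S i))"
definition "free_edges = {f \<in> induced E H. f \<notin> ES}"

abbreviation "free_ball D r k \<equiv> ball (H - D) {f \<in> free_edges. f \<subseteq> H - D} r k"

lemma finite_V: "finite V"
  using graph unfolding is_graph_def by auto

lemma edge_doubleton: "f \<in> E \<Longrightarrow> \<exists>a b. a \<noteq> b \<and> a \<in> V \<and> b \<in> V \<and> f = {a, b}"
  using graph unfolding is_graph_def by auto

lemma finite_E: "finite E"
proof -
  have "E \<subseteq> Pow V"
    using edge_doubleton by blast
  then show ?thesis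
    using finite_V finite_subset by blast
qed

lemma H_subset: "H \<subseteq> V"
  unfolding H_def core_vertices_def by auto

lemma free_edges_subset: "free_edges \<subseteq> E"
  and free_edge_subset_H: "f \<in> free_edges \<Longrightarrow> f \<subseteq> H"
  and free_edge_notin_ES: "f \<in> free_edges \<Longrightarrow> f \<notin> ES"
  unfolding free_edges_def induced_def by auto

lemma l_le: "real l \<le> 3 * L"
  and l_ge: "3 * L - 1 \<le> real l"
  using lnln_ge unfolding lpar_def by linarith+

lemma S_in_H: "i < d \<Longrightarrow> is_path H (induced E H) (S i)"
  using S_paths unfolding H_def by blast

lemma ES_subset: "ES \<subseteq> E"
  using S_in_H path_edges_subset unfolding ES_def induced_def by blast

lemma card_ES: "card ES \<le> d * d"
proof -
  have "card ES \<le> (\<Sum>i<d. card (path_edges (S i)))"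
    unfolding ES_def by (rule card_UN_le) simp
  also have "\<dots> \<le> (\<Sum>i<d. d)"
    using S_paths card_path_edges unfolding plen_def by (intro sum_mono) (metis lessThan_iff)
  finally show ?thesis
    by simp
qed

lemma card_incident_ES: "card {f \<in> ES. v \<in> f} \<le> 2"
proof (cases "\<exists>i<d. v \<in> set (S i)")
  case True
  then obtain i where i: "i < d" "v \<in> set (S i)"
    by auto
  have "{f \<in> ES. v \<in> f} \<subseteq> {f \<in> path_edges (S i). v \<in> f}"
    using S_disjoint i path_edge_subset_set unfolding ES_def by blast
  then have "card {f \<in> ES. v \<in> f} \<le> card {f \<in> path_edges (S i). v \<in> f}"
    by (intro card_mono) auto
  also have "\<dots> \<le> 2"
    using card_incident_path_edges[OF is_path_distinct[OF S_in_H[OF i(1)]], of v]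
    by (simp split: if_splits)
  finally show ?thesis .
next
  case False
  then have "{f \<in> ES. v \<in> f} = {}"
    unfolding ES_def using path_edge_subset_set by blast
  then show ?thesis
    by (simp only: card.empty)
qed

lemma card_incident_free_edges: "v \<in> H \<Longrightarrow> 13 \<le> card {f \<in> free_edges. v \<in> f}"
proof -
  assume "v \<in> H"
  then obtain W where W: "W \<subseteq> V" "min_deg_ge W (induced E W) 15" "v \<in> W"
    unfolding H_def core_vertices_def by auto
  then have "W \<subseteq> H"
    unfolding H_def core_vertices_def by auto
  then have "{f \<in> induced E W. v \<in> f} \<subseteq> {f \<in> free_edges. v \<in> f} \<union> {f \<in> ES. v \<in> f}"
    unfolding free_edges_def induced_def by auto
  moreover have "finite ({f \<in> free_edges. v \<in> f} \<union> {f \<in> ES. v \<in> f})"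
    using finite_E free_edges_subset ES_subset by (auto intro: finite_subset)
  ultimately have "card {f \<in> induced E W. v \<in> f} \<le> card {f \<in> free_edges. v \<in> f} + card {f \<in> ES. v \<in> f}"
    by (meson card_Un_le card_mono order_trans)
  moreover have "15 \<le> card {f \<in> induced E W. v \<in> f}"
    using W unfolding min_deg_ge_def degree_def by auto
  ultimately show ?thesis
    using card_incident_ES[of v] by linarith
qed

lemma free_edges_meeting_lower_bound:
  assumes C: "finite C" "C \<subseteq> H"
  shows "13 * card C \<le> card {f \<in> free_edges. f \<inter> C \<noteq> {}} + spans E C"
proof -
  define F where "F = {f \<in> free_edges. f \<inter> C \<noteq> {}}"
  have finite_F: "finite F"
    unfolding F_def using finite_E free_edges_subset by (auto intro: finite_subset)
  have "13 * card C = (\<Sum>v\<in>C. 13)"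
    by simp
  also have "\<dots> \<le> (\<Sum>v\<in>C. card {f \<in> free_edges. v \<in> f})"
    using C card_incident_free_edges by (intro sum_mono) auto
  also have "\<dots> = (\<Sum>v\<in>C. card {f \<in> F. v \<in> f})"
    unfolding F_def by (intro sum.cong arg_cong[where f = card]) auto
  also have "\<dots> = (\<Sum>f\<in>F. card (f \<inter> C))"
    using C(1) finite_F by (rule sum_card_incident)
  also have "\<dots> \<le> (\<Sum>f\<in>F. 1 + (if f \<subseteq> C then 1 else 0))"
  proof (intro sum_mono)
    fix f
    assume "f \<in> F"
    then obtain a b where "f = {a, b}"
      using edge_doubleton free_edges_subset unfolding F_def by blast
    then show "card (f \<inter> C) \<le> 1 + (if f \<subseteq> C then 1 else 0)"
      by (cases "a \<in> C"; cases "b \<in> C") (auto simp: card_insert_if)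
  qed
  also have "\<dots> = card F + card {f \<in> F. f \<subseteq> C}"
    using finite_F by (simp add: sum.distrib sum.inter_filter[symmetric] del: One_nat_def)
  also have "\<dots> \<le> card F + spans E C"
    unfolding spans_def F_def using finite_E free_edges_subset by (intro add_left_mono card_mono) auto
  finally show ?thesis
    unfolding F_def .
qed

text \<open>The vertices deleted near the centre \<open>r\<close> of a growing ball are collected in a small set
  \<open>Q\<close> spanning almost as many edges as it has vertices (in the application, the vertex set of a
  path); this is what the sparseness of small sets is played against.\<close>

definition local_trace :: "nat set \<Rightarrow> nat \<Rightarrow> nat set \<Rightarrow> bool" where
  "local_trace D r Q \<longleftrightarrow> Q \<subseteq> D \<and> Q \<subseteq> V \<and> D \<inter> ball H free_edges r l \<subseteq> Q \<and>
     card Q \<le> l + 1 \<and> card Q \<le> spans E Q + 1"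

lemma free_edge_at_free_ball:
  assumes "local_trace D r Q" "k < l" "v \<in> free_ball D r k" "f \<in> free_edges" "v \<in> f"
  shows "f \<subseteq> free_ball D r (Suc k) \<union> Q"
proof
  fix w
  assume "w \<in> f"
  show "w \<in> free_ball D r (Suc k) \<union> Q"
  proof (cases "w = v")
    case True
    then show ?thesis
      using assms(3) ball_radius_mono[of k "Suc k"] by auto
  next
    case False
    obtain a b where "a \<noteq> b" "f = {a, b}"
      using assms(4) edge_doubleton free_edges_subset by blast
    with False assms(5) \<open>w \<in> f\<close> have f: "f = {v, w}"
      by auto
    have "w \<in> H"
      using assms(4) \<open>w \<in> f\<close> free_edge_subset_H by blast
    have v: "v \<in> H - D" "v \<in> ball H free_edges r k"
      using assms(3) ball_subset[of "H - D"]
        ball_mono[of "H - D" H "{f \<in> free_edges. f \<subseteq> H - D}" free_edges]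
      by blast+
    have "w \<in> ball H free_edges r (Suc k)"
      using ball_Suc_neighbour[OF v(2)] f \<open>w \<in> H\<close> assms(4) by blast
    then have near: "w \<in> ball H free_edges r l"
      using ball_radius_mono[of "Suc k" l] assms(2) by auto
    show ?thesis
    proof (cases "w \<in> D")
      case True
      then show ?thesis
        using near assms(1) unfolding local_trace_def by blast
    next
      case False
      then have "{v, w} \<in> {f \<in> free_edges. f \<subseteq> H - D}"
        using f v \<open>w \<in> H\<close> assms(4) by auto
      then have "w \<in> free_ball D r (Suc k)"
        using ball_Suc_neighbour[OF assms(3)] \<open>w \<in> H\<close> False by blast
      then show ?thesis
        by blast
    qed
  qed
qed

lemma finite_free_ball: "finite (free_ball D r k)"
  using finite_ball finite_V H_subset by (meson finite_Diff finite_subset)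

lemma spans_small_set:
  assumes "U \<subseteq> V" "real (card U) \<le> sqrt (real n)"
  shows "spans E U \<le> card U \<or> (spans E U \<le> 2 * card U \<and> 10 * L < real (card U))"
proof (cases "real (card U) \<le> 10 * L")
  case True
  then show ?thesis
    using very_sparse assms(1) by blast
next
  case False
  then show ?thesis
    using sparse assms by auto
qed

lemma free_edges_meeting_ball:
  assumes Q: "local_trace D r Q" and "k < l"
  shows "card {f \<in> free_edges. f \<inter> free_ball D r k \<noteq> {}} + spans E Q
    \<le> spans E (free_ball D r (Suc k) \<union> Q)"
proof -
  define F where "F = {f \<in> free_edges. f \<inter> free_ball D r k \<noteq> {}}"
  have "free_ball D r k \<inter> Q = {}"
    using Q ball_subset[of "H - D"] unfolding local_trace_def by blast
  then have "F \<inter> {f \<in> E. f \<subseteq> Q} = {}"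
    unfolding F_def by blast
  moreover have "F \<subseteq> {f \<in> E. f \<subseteq> free_ball D r (Suc k) \<union> Q}"
    unfolding F_def using free_edge_at_free_ball[OF Q \<open>k < l\<close>] free_edges_subset by blast
  moreover have "{f \<in> E. f \<subseteq> Q} \<subseteq> {f \<in> E. f \<subseteq> free_ball D r (Suc k) \<union> Q}"
    by blast
  moreover have "finite {f \<in> E. f \<subseteq> free_ball D r (Suc k) \<union> Q}"
    using finite_E by simp
  ultimately show ?thesis
    unfolding spans_def F_def using card_Un_disjoint card_mono
    by (metis (no_types, lifting) finite_subset le_sup_iff)
qed

lemma free_ball_growth_step:
  assumes r: "r \<in> H" "r \<notin> D" and Q: "local_trace D r Q" and "k < l"
    and small: "real (card (free_ball D r (Suc k)) + card Q) \<le> sqrt (real n)"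
  shows "4 * card (free_ball D r k) \<le> card (free_ball D r (Suc k))"
proof -
  define C C' where "C = free_ball D r k" and "C' = free_ball D r (Suc k)"
  have "C \<subseteq> C'" "C' \<subseteq> H - D" "finite C'" "r \<in> C"
    unfolding C_def C'_def using ball_radius_mono ball_subset finite_free_ball r
    by (auto intro: center_in_ball)
  then have C: "finite C" "C \<subseteq> H" "1 \<le> card C" "card C \<le> card C'"
    using finite_subset by (auto simp: card_mono Suc_le_eq card_gt_0_iff)
  have "Q \<subseteq> D" "Q \<subseteq> V" "card Q \<le> spans E Q + 1" "real (card Q) \<le> 3 * L + 1"
    using Q l_le unfolding local_trace_def by auto
  moreover have "finite Q" "C' \<inter> Q = {}"
    using \<open>Q \<subseteq> V\<close> \<open>Q \<subseteq> D\<close> \<open>C' \<subseteq> H - D\<close> finite_V finite_subset by auto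
  ultimately have U: "C' \<union> Q \<subseteq> V" "card (C' \<union> Q) = card C' + card Q"
    using \<open>C' \<subseteq> H - D\<close> \<open>finite C'\<close> H_subset by (auto simp: card_Un_disjoint)
  have "13 * card C \<le> card {f \<in> free_edges. f \<inter> C \<noteq> {}} + spans E C"
    using free_edges_meeting_lower_bound C by blast
  moreover have "card {f \<in> free_edges. f \<inter> C \<noteq> {}} + spans E Q \<le> spans E (C' \<union> Q)"
    unfolding C_def C'_def using free_edges_meeting_ball[OF Q \<open>k < l\<close>] .
  moreover have "spans E C \<le> 2 * card C"
    using sparse C(2,4) H_subset small[folded C'_def] by force
  moreover have "spans E (C' \<union> Q) \<le> card (C' \<union> Q) \<or>
      (spans E (C' \<union> Q) \<le> 2 * card (C' \<union> Q) \<and> 10 * L < real (card (C' \<union> Q)))"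
    using U small[folded C'_def] by (intro spans_small_set) simp_all
  ultimately have "11 * card C \<le> card C' + 1 \<or>
      (11 * card C \<le> 2 * card C' + card Q + 1 \<and> 10 * L < real (card C' + card Q))"
    using U(2) \<open>card Q \<le> spans E Q + 1\<close> by auto
  then have "4 * card C \<le> card C'"
  proof (elim disjE conjE)
    assume "11 * card C \<le> 2 * card C' + card Q + 1" "10 * L < real (card C' + card Q)"
    then have "11 * real (card C) \<le> 2 * real (card C') + real (card Q) + 1"
      "10 * L < real (card C') + real (card Q)"
      by linarith+
    then have "4 * real (card C) \<le> real (card C')"
      using \<open>real (card Q) \<le> 3 * L + 1\<close> lnln_ge by linarith
    then show ?thesis
      by linarith
  qed (use C(3) in linarith)
  then show ?thesis
    unfolding C_def C'_def .
qed

lemma free_ball_growth: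
  assumes "r \<in> H" "r \<notin> D" "local_trace D r Q"
  shows "k \<le> l \<Longrightarrow>
    4 ^ k \<le> card (free_ball D r k) \<or> sqrt (real n) < real (card (free_ball D r k) + card Q)"
proof (induction k)
  case 0
  have "r \<in> free_ball D r 0"
    using assms by (intro center_in_ball) auto
  then have "0 < card (free_ball D r 0)"
    using finite_free_ball card_gt_0_iff by blast
  then show ?case
    by simp
next
  case (Suc k)
  show ?case
  proof (cases "sqrt (real n) < real (card (free_ball D r (Suc k)) + card Q)")
    case False
    have "card (free_ball D r k) \<le> card (free_ball D r (Suc k))"
      by (intro card_mono finite_free_ball ball_radius_mono) simp
    with False Suc have "4 ^ k \<le> card (free_ball D r k)"
      by linarith
    moreover have "4 * card (free_ball D r k) \<le> card (free_ball D r (Suc k))"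
      using False Suc.prems by (intro free_ball_growth_step[OF assms]) auto
    ultimately show ?thesis
      by simp
  qed simp
qed

lemma large_ball_after_deletion:
  assumes "r \<in> H" "r \<notin> D" "local_trace D r Q"
  shows "(ln (real n))^3 \<le> real (card (ball (V - D) {f \<in> E - ES. f \<subseteq> V - D} r l))"
proof -
  have "4 powr (3 * L - 1) \<le> 4 powr (real l)"
    using l_ge by (intro powr_mono) auto
  then have "(ln (real n))^3 \<le> 4 ^ l"
    using ln_cube_le_pow by (simp add: powr_realpow)
  moreover have "real (card Q) \<le> 3 * L + 1"
    using assms(3) l_le unfolding local_trace_def by auto
  moreover have "4 ^ l \<le> card (free_ball D r l) \<or>
      sqrt (real n) < real (card (free_ball D r l)) + real (card Q)"
    using free_ball_growth[OF assms, of l] by simp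
  then have "(4::real) ^ l \<le> real (card (free_ball D r l)) \<or>
      sqrt (real n) < real (card (free_ball D r l)) + real (card Q)"
    by (metis of_nat_le_iff of_nat_numeral of_nat_power)
  ultimately have "(ln (real n))^3 \<le> real (card (free_ball D r l))"
    using ln_cube_le_sqrt by linarith
  moreover have "free_ball D r l \<subseteq> ball (V - D) {f \<in> E - ES. f \<subseteq> V - D} r l"
    using H_subset free_edges_subset free_edge_notin_ES by (intro ball_mono) auto
  then have "card (free_ball D r l) \<le> card (ball (V - D) {f \<in> E - ES. f \<subseteq> V - D} r l)"
    using finite_ball finite_V by (meson card_mono finite_Diff)
  ultimately show ?thesis
    by linarith
qed

lemma e_in_ES: "i < d \<Longrightarrow> e i \<in> ES"
  unfolding ES_def using e_on_S by blast

lemma e_subset_S: "i < d \<Longrightarrow> e i \<subseteq> set (S i)"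
  using e_on_S path_edge_subset_set by blast

lemma e_in_E: "i < d \<Longrightarrow> e i \<in> E"
  and e_subset_H: "i < d \<Longrightarrow> e i \<subseteq> H"
proof -
  assume "i < d"
  then have "e i \<in> induced E H"
    using e_on_S path_edges_subset[OF S_in_H] by blast
  then show "e i \<in> E" "e i \<subseteq> H"
    unfolding induced_def by auto
qed

definition nbhd :: "nat \<Rightarrow> nat set" where
  "nbhd i = (\<Union>v\<in>e i. ball H free_edges v l)"

lemma e_subset_nbhd: "i < d \<Longrightarrow> e i \<subseteq> nbhd i"
  unfolding nbhd_def using e_subset_H center_in_ball[of _ H free_edges l] by blast

lemma ball_subset_nbhd: "v \<in> e i \<Longrightarrow> ball H free_edges v l \<subseteq> nbhd i"
  unfolding nbhd_def by blast

lemma nbhd_disjoint: "i < d \<Longrightarrow> j < d \<Longrightarrow> i \<noteq> j \<Longrightarrow> nbhd i \<inter> nbhd j = {}"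
proof -
  assume ij: "i < d" "j < d" "i \<noteq> j"
  have near_S: "\<exists>a\<in>set (S k). x \<in> ball V E a l" if "k < d" "x \<in> nbhd k" for k x
    using that e_subset_S ball_mono[OF H_subset free_edges_subset] unfolding nbhd_def by blast
  show ?thesis
  proof (rule ccontr)
    assume "nbhd i \<inter> nbhd j \<noteq> {}"
    then obtain x where "x \<in> nbhd i" "x \<in> nbhd j"
      by blast
    then obtain a b where "a \<in> set (S i)" "b \<in> set (S j)" "x \<in> ball V E a l" "x \<in> ball V E b l"
      using near_S ij by meson
    moreover have "\<forall>a\<in>set (S i). \<forall>b\<in>set (S j). ball V E a l \<inter> ball V E b l = {}"
      using S_balls_disjoint ij by simp
    ultimately show False
      by blast
  qed
qed

text \<open>\<open>Q\<close> is the vertex set of the path by which \<open>P\<close> entered \<open>nbhd j\<close>. Keeping the part of \<open>P\<close>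
  inside \<open>nbhd j\<close> this small and path-like is what keeps the ball around the end of \<open>P\<close> large
  after the rest of \<open>P\<close> is deleted.\<close>

definition partial_solution :: "nat list \<Rightarrow> nat set \<Rightarrow> nat \<Rightarrow> nat set \<Rightarrow> bool" where
  "partial_solution P I j Q \<longleftrightarrow>
     I \<subseteq> {..<d} \<and> j \<in> I \<and> is_path V E P \<and> path_edges P \<inter> ES = e ` I \<and>
     (\<forall>i<d. i \<notin> I \<longrightarrow> set P \<inter> nbhd i = {}) \<and>
     last P \<in> e j \<and> Q \<subseteq> set P \<and> last P \<notin> Q \<and> (set P - {last P}) \<inter> nbhd j \<subseteq> Q \<and>
     card Q \<le> l + 1 \<and> card Q \<le> spans E Q + 1 \<and>
     real (length P) \<le> real (card I) * (2 * ln (real n) + real l + 2)"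

lemma partial_solution_initial: "\<exists>P Q. partial_solution P {0} 0 Q"
proof -
  obtain a b where ab: "a \<noteq> b" "e 0 = {a, b}"
    using e_in_E[OF d_pos] edge_doubleton by blast
  have "is_path V E [a, b]"
    using ab e_in_E[OF d_pos] e_subset_H[OF d_pos] H_subset by (auto simp: is_path_Cons_Cons)
  moreover have "set [a, b] \<inter> nbhd i = {}" if "i < d" "i \<noteq> 0" for i
    using e_subset_nbhd[OF d_pos] nbhd_disjoint[OF d_pos that(1)] that ab by auto
  moreover have "path_edges [a, b] \<inter> ES = {e 0}"
    using ab e_in_ES[OF d_pos] by (auto simp: path_edges_Cons_Cons)
  moreover have "real (length [a, b]) \<le> real (card {0::nat}) * (2 * ln (real n) + real l + 2)"
    using ln_ge by simp
  ultimately have "partial_solution [a, b] {0} 0 {a}"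
    unfolding partial_solution_def using ab d_pos by (simp; blast)
  then show ?thesis
    by blast
qed

lemma card_set_path_le_spans:
  assumes "is_path V' E' q" "E' \<subseteq> E"
  shows "card (set q) \<le> spans E (set q) + 1"
proof -
  have "path_edges q \<subseteq> {f \<in> E. f \<subseteq> set q}"
    using assms path_edges_subset path_edge_subset_set by blast
  then have "card (path_edges q) \<le> spans E (set q)"
    unfolding spans_def using finite_E by (intro card_mono) auto
  then show ?thesis
    using card_path_edges[OF assms(1)] distinct_card[OF is_path_distinct[OF assms(1)]] by simp
qed

lemma deletion_budget:
  assumes "card I \<le> d" "real (length P) \<le> real (card I) * (2 * ln (real n) + real l + 2)"
  shows "real (length P + card ES) \<le> 20 * real d * ln (real n)"
proof -
  have "2 * ln (real n) + real l + 2 \<le> 10 * ln (real n)"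
    using l_le lnln_le_ln by linarith
  then have "real (card I) * (2 * ln (real n) + real l + 2) \<le> real d * (10 * ln (real n))"
    using assms(1) ln_ge by (intro mult_mono) auto
  moreover have "real (card ES) \<le> real d * real d"
    using card_ES by (metis of_nat_le_iff of_nat_mult)
  moreover have "real d * real d \<le> real d * (10 * ln (real n))"
    using d_le by (intro mult_left_mono) auto
  ultimately show ?thesis
    using assms(2) by simp
qed

lemma partial_solutionD:
  assumes "partial_solution P I j Q"
  shows "I \<subseteq> {..<d}" "j \<in> I" "is_path V E P" "path_edges P \<inter> ES = e ` I"
    "\<And>i. i < d \<Longrightarrow> i \<notin> I \<Longrightarrow> set P \<inter> nbhd i = {}"
    "last P \<in> e j" "Q \<subseteq> set P" "last P \<notin> Q" "(set P - {last P}) \<inter> nbhd j \<subseteq> Q"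
    "card Q \<le> l + 1" "card Q \<le> spans E Q + 1"
    "real (length P) \<le> real (card I) * (2 * ln (real n) + real l + 2)"
  using assms unfolding partial_solution_def by auto

lemma ball_at_end_large:
  assumes P: "partial_solution P I j Q"
  defines "X \<equiv> set P - {last P}"
  shows "(ln (real n))^3 \<le> real (card (ball (V - X) {f \<in> E - ES. f \<subseteq> V - X} (last P) l))"
proof (rule large_ball_after_deletion)
  note P = partial_solutionD[OF P]
  have "j < d"
    using P(1,2) by blast
  then show "last P \<in> H"
    using e_subset_H P(6) by blast
  have "X \<inter> ball H free_edges (last P) l \<subseteq> Q"
    using P(9) ball_subset_nbhd[OF P(6)] unfolding X_def by blast
  moreover have "Q \<subseteq> V"
    using P(7) is_path_subset[OF P(3)] by blast
  ultimately show "local_trace X (last P) Q"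
    using P(7,8,10,11) unfolding local_trace_def X_def by blast
qed (simp add: X_def)

lemma ball_at_unused_large:
  assumes P: "partial_solution P I j Q" and i: "i < d" "i \<notin> I" "a \<in> e i"
  defines "X \<equiv> set P - {last P}"
  shows "(ln (real n))^3 \<le> real (card (ball (V - X) {f \<in> E - ES. f \<subseteq> V - X} a l))"
proof (rule large_ball_after_deletion)
  have P_nbhd: "set P \<inter> nbhd i = {}"
    using partial_solutionD(5)[OF P i(1,2)] .
  have "a \<in> nbhd i"
    using e_subset_nbhd[OF i(1)] i(3) by blast
  then show "a \<notin> X"
    using P_nbhd unfolding X_def by blast
  show "a \<in> H"
    using e_subset_H[OF i(1)] i(3) by blast
  have "X \<inter> ball H free_edges a l = {}"
    using P_nbhd ball_subset_nbhd[OF i(3)] unfolding X_def by blast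
  then show "local_trace X a {}"
    unfolding local_trace_def by simp
qed

lemma path_to_unused_edge:
  assumes P: "partial_solution P I j0 Q" and "card I < d"
  defines "X \<equiv> set P - {last P}"
  obtains i p where "i < d" "i \<notin> I" "is_path (V - X) {f \<in> E - ES. f \<subseteq> V - X} p"
    "hd p = last P" "last p \<in> e i" "real (plen p) \<le> 2 * ln (real n)"
proof -
  note P' = partial_solutionD[OF P]
  have PV: "set P \<subseteq> V" "P \<noteq> []"
    using is_path_subset[OF P'(3)] is_path_nonempty[OF P'(3)] by auto
  have "\<not> {..<d} \<subseteq> I"
    using P'(1) \<open>card I < d\<close> card_mono[of I "{..<d}"] by auto
  then obtain i where i: "i < d" "i \<notin> I"
    by auto
  obtain a where a: "a \<in> e i"
    using e_in_E[OF i(1)] edge_doubleton by blast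
  have "a \<notin> set P"
    using P'(5)[OF i] a e_subset_nbhd[OF i(1)] by blast
  then have ends: "last P \<in> V - X" "a \<in> V - X"
    using PV a e_subset_H[OF i(1)] H_subset unfolding X_def by auto
  have "card X \<le> length P"
    unfolding X_def by (meson card_Diff1_le card_length order_trans)
  then have budget: "real (card X + card ES) \<le> 20 * real d * ln (real n)"
    using deletion_budget[OF _ P'(12)] \<open>card I < d\<close> by simp
  have "X \<subseteq> V"
    using PV unfolding X_def by blast
  from connected_after_deletion[rule_format, OF conjI[OF this conjI[OF ES_subset budget]] ends
      conjI[OF ball_at_end_large[OF P, folded X_def] ball_at_unused_large[OF P i a, folded X_def]]]
  show thesis
    using that[OF i] a by blast
qed

lemma connecting_segment:
  assumes P: "partial_solution P I j0 Q" and "card I < d"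
  obtains j R where "j < d" "j \<notin> I" "is_path V E R" "hd R = last P" "last R \<in> nbhd j"
    "set P \<inter> set R \<subseteq> {last P}" "path_edges R \<inter> ES = {}"
    "\<forall>i<d. i \<notin> I \<longrightarrow> set R \<inter> nbhd i \<subseteq> {last R}" "real (length R) \<le> 2 * ln (real n) + 1"
proof -
  define X where "X = set P - {last P}"
  define E' where "E' = {f \<in> E - ES. f \<subseteq> V - X}"
  obtain i p where i: "i < d" "i \<notin> I" and p: "is_path (V - X) E' p" "hd p = last P" "last p \<in> e i"
    "real (plen p) \<le> 2 * ln (real n)"
    using path_to_unused_edge[OF assms] unfolding X_def E'_def by blast
  define A where "A = (\<Union>i\<in>{i. i < d \<and> i \<notin> I}. nbhd i)"
  have "last p \<in> A"
    unfolding A_def using p(3) e_subset_nbhd[OF i(1)] i by blast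
  then obtain R where R: "is_path (V - X) E' R" "hd R = hd p" "last R \<in> A"
    "\<forall>v\<in>set R. v \<in> A \<longrightarrow> v = last R" "length R \<le> length p"
    using path_prefix_first_hit[OF p(1)] by blast
  then obtain j where "j < d" "j \<notin> I" "last R \<in> nbhd j"
    unfolding A_def by blast
  moreover have "is_path V E R"
    using R(1) unfolding E'_def by (rule is_path_mono) auto
  moreover have "path_edges R \<inter> ES = {}"
    using path_edges_subset[OF R(1)] unfolding E'_def by blast
  moreover have "set P \<inter> set R \<subseteq> {last P}"
    using is_path_subset[OF R(1)] unfolding X_def by blast
  moreover have "\<forall>i<d. i \<notin> I \<longrightarrow> set R \<inter> nbhd i \<subseteq> {last R}"
    using R(4) unfolding A_def by blast
  moreover have "real (length R) \<le> 2 * ln (real n) + 1"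
    using R(5) p(4) unfolding plen_def by linarith
  ultimately show thesis
    using that[of j R] R(2) p(2) by argo
qed
lemma attaching_segment:
  assumes "j < d" "w \<in> nbhd j"
  obtains q r' where "is_path H free_edges q" "last q = w" "e j = {hd q, r'}" "r' \<notin> set q"
    "plen q \<le> l" "set q \<subseteq> nbhd j"
proof -
  obtain a where a: "w \<in> ball H free_edges a l" "a \<in> e j"
    using assms(2) unfolding nbhd_def by blast
  obtain q where q: "is_path H free_edges q" "hd q \<in> e j" "last q = w" "plen q \<le> l"
    "\<forall>v\<in>set q. v \<in> e j \<longrightarrow> v = hd q"
    by (rule path_from_nearest[OF a])
  obtain x y where xy: "x \<noteq> y" "e j = {x, y}"
    using e_in_E[OF assms(1)] edge_doubleton by blast
  define r' where "r' = (if hd q = x then y else x)"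
  have r': "e j = {hd q, r'}" "r' \<noteq> hd q"
    using xy q(2) unfolding r'_def by auto
  then have "r' \<notin> set q"
    using q(5) by blast
  moreover have "set q \<subseteq> nbhd j"
    using set_path_subset_ball[OF q(1)] ball_radius_mono[OF q(4), of H free_edges "hd q"]
      ball_subset_nbhd[OF q(2)] by blast
  ultimately show thesis
    using that[of q r'] q(1,3,4) r'(1) by blast
qed

lemma extended_path:
  assumes P: "partial_solution P I j0 Q" and j: "j < d" "j \<notin> I"
    and R: "is_path V E R" "hd R = last P" "last R = w" "set P \<inter> set R \<subseteq> {last P}"
      "set R \<inter> nbhd j \<subseteq> {w}"
    and q: "is_path H free_edges q" "last q = w" "e j = {hd q, r'}" "r' \<notin> set q" "set q \<subseteq> nbhd j"
  defines "P' \<equiv> P @ tl R @ tl (rev q) @ tl [hd q, r']"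
  shows "is_path V E P'" "set P' = set P \<union> set R \<union> set q \<union> {r'}"
    "path_edges P' = path_edges P \<union> path_edges R \<union> path_edges q \<union> {e j}"
    "last P' = r'" "length P' + 1 = length P + length R + length q"
proof -
  have ne: "P \<noteq> []" "R \<noteq> []" "q \<noteq> []"
    using is_path_nonempty P R(1) q(1) unfolding partial_solution_def by auto
  have P_nbhd: "set P \<inter> nbhd j = {}"
    using partial_solutionD(5)[OF P j] .
  have r': "r' \<in> nbhd j" "hd q \<in> V" "r' \<in> V" "e j \<in> E"
    using e_subset_nbhd[OF j(1)] e_subset_H[OF j(1)] H_subset e_in_E[OF j(1)] q(3) by auto
  define P1 where "P1 = P @ tl R"
  have PR: "last P = hd R"
    using R(2) by simp
  have P1: "is_path V E P1" "set P1 = set P \<union> set R" "last P1 = w"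
    "path_edges P1 = path_edges P \<union> path_edges R"
    unfolding P1_def using is_path_join[OF partial_solutionD(3)[OF P] R(1) PR] R(3,4) PR
      set_join[OF ne(1,2) PR] last_join[OF ne(1,2) PR] path_edges_join[OF ne(1) PR] by auto
  define P2 where "P2 = P1 @ tl (rev q)"
  have "is_path V E (rev q)"
    using is_path_rev[OF q(1)] H_subset free_edges_subset by (rule is_path_mono)
  moreover have "set P1 \<inter> set (rev q) \<subseteq> {w}"
    using P1(2) P_nbhd R(5) q(5) by auto
  moreover have P1q: "last P1 = hd (rev q)" "rev q \<noteq> []" "P1 \<noteq> []"
    using P1(3) q(2) ne by (auto simp: hd_rev P1_def)
  ultimately have P2: "is_path V E P2" "set P2 = set P1 \<union> set q" "last P2 = hd q"
    "path_edges P2 = path_edges P1 \<union> path_edges q"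
    unfolding P2_def using is_path_join[OF P1(1) _ P1q(1)] set_join[OF P1q(3,2,1)]
      last_join[OF P1q(3,2,1)] path_edges_join[OF P1q(3,1)] P1(3) ne
    by (auto simp: last_rev simp del: set_append)
  have "r' \<notin> set P2"
    using P2(2) P1(2) P_nbhd R(5) r'(1) q(2,4) ne(3) last_in_set by fastforce
  moreover have "is_path V E [hd q, r']"
    using r' q(3,4) ne(3) by (auto simp: is_path_Cons_Cons)
  ultimately have "is_path V E (P2 @ tl [hd q, r'])"
    using P2(1,3) by (intro is_path_join) auto
  moreover have "P' = P2 @ tl [hd q, r']"
    unfolding P'_def P2_def P1_def by simp
  moreover have "path_edges (P2 @ tl [hd q, r']) = path_edges P2 \<union> {e j}"
    using path_edges_join[of P2 "[hd q, r']"] P2(3) is_path_nonempty[OF P2(1)] q(3)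
    by (simp add: path_edges_Cons_Cons)
  moreover have "length P2 + 2 = length P + length R + length q"
    unfolding P2_def P1_def using ne by (cases R; cases q) auto
  ultimately show "is_path V E P'" "set P' = set P \<union> set R \<union> set q \<union> {r'}"
    "path_edges P' = path_edges P \<union> path_edges R \<union> path_edges q \<union> {e j}"
    "last P' = r'" "length P' + 1 = length P + length R + length q"
    using P1 P2 ne by auto
qed

lemma partial_solution_step:
  assumes P: "partial_solution P I j0 Q" and j: "j < d" "j \<notin> I"
    and R: "is_path V E R" "hd R = last P" "last R \<in> nbhd j"
      "set P \<inter> set R \<subseteq> {last P}" "path_edges R \<inter> ES = {}"
      "\<forall>i<d. i \<notin> I \<longrightarrow> set R \<inter> nbhd i \<subseteq> {last R}" "real (length R) \<le> 2 * ln (real n) + 1"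
    and q: "is_path H free_edges q" "last q = last R" "e j = {hd q, r'}" "r' \<notin> set q"
      "plen q \<le> l" "set q \<subseteq> nbhd j"
  defines "P'' \<equiv> P @ tl R @ tl (rev q) @ tl [hd q, r']"
  shows "partial_solution P'' (insert j I) j (set q)"
proof -
  note P' = partial_solutionD[OF P]
  have R_nbhd: "\<And>i. i < d \<Longrightarrow> i \<notin> I \<Longrightarrow> set R \<inter> nbhd i \<subseteq> {last R}"
    using R(6) by blast
  note ext = extended_path[OF P j R(1,2) refl R(4) R_nbhd[OF j] q(1,2,3,4,6), folded P''_def]
  have "last R \<in> set q"
    using q(2) is_path_nonempty[OF q(1)] last_in_set by fastforce
  have q_len: "card (set q) = length q" "length q \<le> l + 1"
    using distinct_card[OF is_path_distinct[OF q(1)]] q(5) unfolding plen_def by auto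
  have "path_edges q \<inter> ES = {}"
    using path_edges_subset[OF q(1)] free_edge_notin_ES by blast
  then have edges: "path_edges P'' \<inter> ES = e ` insert j I"
    unfolding ext(3) using P'(4) R(5) e_in_ES[OF j(1)] by (auto simp: Int_Un_distrib2)
  have "r' \<in> nbhd j"
    using e_subset_nbhd[OF j(1)] q(3) by blast
  have avoid: "set P'' \<inter> nbhd i = {}" if "i < d" "i \<notin> insert j I" for i
  proof -
    have "nbhd i \<inter> nbhd j = {}"
      using nbhd_disjoint that j(1) by blast
    moreover have "set R \<inter> nbhd i \<subseteq> {last R}"
      using R_nbhd that by blast
    ultimately have "set R \<inter> nbhd i = {}"
      using R(3) by blast
    moreover have "set P \<inter> nbhd i = {}"
      using P'(5) that by blast
    ultimately show ?thesis
      unfolding ext(2) using q(6) \<open>r' \<in> nbhd j\<close> \<open>nbhd i \<inter> nbhd j = {}\<close> by blast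
  qed
  have near_end: "(set P'' - {last P''}) \<inter> nbhd j \<subseteq> set q"
    unfolding ext(2) ext(4) using P'(5)[OF j] R_nbhd[OF j] \<open>last R \<in> set q\<close> by blast
  have len: "real (length P'') \<le> real (card (insert j I)) * (2 * ln (real n) + real l + 2)"
  proof -
    have "finite I"
      using P'(1) finite_subset by blast
    then have "real (card (insert j I)) = real (card I) + 1"
      using j(2) by simp
    moreover have "real (length P'') + 1 = real (length P) + real (length R) + real (length q)"
      using ext(5) by (metis of_nat_add of_nat_1)
    ultimately show ?thesis
      using P'(12) R(7) q_len(2) by (simp add: algebra_simps)
  qed
  show ?thesis
    unfolding partial_solution_def
    using P'(1) j(1) ext(1,2,4) q(3,4) q_len edges avoid near_end len
      card_set_path_le_spans[OF q(1) free_edges_subset]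
    by (simp add: subset_insertI2)
qed


lemma partial_solution_extend:
  assumes P: "partial_solution P I j0 Q" and "card I < d"
  shows "\<exists>P' j Q'. j \<notin> I \<and> partial_solution P' (insert j I) j Q'"
proof -
  obtain j R where j: "j < d" "j \<notin> I" and R: "is_path V E R" "hd R = last P" "last R \<in> nbhd j"
    "set P \<inter> set R \<subseteq> {last P}" "path_edges R \<inter> ES = {}"
    "\<forall>i<d. i \<notin> I \<longrightarrow> set R \<inter> nbhd i \<subseteq> {last R}" "real (length R) \<le> 2 * ln (real n) + 1"
    by (rule connecting_segment[OF assms])
  obtain q r' where "is_path H free_edges q" "last q = last R" "e j = {hd q, r'}" "r' \<notin> set q"
    "plen q \<le> l" "set q \<subseteq> nbhd j"
    by (rule attaching_segment[OF j(1) R(3)])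
  then show ?thesis
    using partial_solution_step[OF P j R] j(2) by blast
qed

lemma partial_solution_exists: "1 \<le> m \<Longrightarrow> m \<le> d \<Longrightarrow> \<exists>P I j Q. partial_solution P I j Q \<and> card I = m"
proof (induction m rule: nat_induct_at_least)
  case base
  then show ?case
    using partial_solution_initial by fastforce
next
  case (Suc m)
  then obtain P I j Q where P: "partial_solution P I j Q" "card I = m"
    by auto
  then obtain P' j' Q' where "j' \<notin> I" "partial_solution P' (insert j' I) j' Q'"
    using partial_solution_extend Suc.prems by fastforce
  moreover have "finite I"
    using partial_solutionD(1)[OF P(1)] finite_subset by blast
  ultimately show ?case
    using P(2) by force
qed

lemma path_through_chosen_edges: "\<exists>P. is_path V E P \<and> e ` {..<d} \<subseteq> path_edges P \<and>
    path_edges P \<inter> (\<Union>i<d. path_edges (S i)) \<subseteq> e ` {..<d}"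
proof -
  obtain P I j Q where P: "partial_solution P I j Q" "card I = d"
    using partial_solution_exists[of d] d_pos by auto
  then have "I = {..<d}"
    using partial_solutionD(1)[OF P(1)] by (intro card_subset_eq) auto
  then have "path_edges P \<inter> ES = e ` {..<d}"
    using partial_solutionD(4)[OF P(1)] by simp
  then show ?thesis
    using partial_solutionD(3)[OF P(1)] unfolding ES_def by blast
qed

end

lemma eventually_ln_ge: "eventually (\<lambda>n::nat. K \<le> ln (real n)) sequentially"
proof -
  have "filterlim (\<lambda>n::nat. ln (real n)) at_top sequentially"
    by real_asymp
  then show ?thesis
    by (simp add: filterlim_at_top)
qed

lemma one_less_ln_4: "1 < ln (4::real)"
proof -
  have "exp 1 < (4::real)"
    using exp_le by linarith
  then have "ln (exp 1) < ln (4::real)"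
    by (subst ln_less_cancel_iff) auto
  then show ?thesis
    by simp
qed

lemma cube_le_four_powr:
  fixes y :: real
  assumes "1 \<le> y" and "4 powr (1 / (3 * ln 4 - 3)) \<le> y"
  shows "y ^ 3 \<le> 4 powr (3 * ln y - 1)"
proof -
  define c where "c = 3 * ln (4::real) - 3"
  have "0 < c" "0 < y"
    unfolding c_def using one_less_ln_4 assms(1) by auto
  have "4 powr (3 * ln y - 1) = 4 powr (3 * ln y) / 4"
    by (simp add: powr_diff)
  also have "4 powr (3 * ln y) = y powr (3 * ln 4)"
    using \<open>0 < y\<close> by (simp add: powr_def)
  also have "y powr (3 * ln 4) = y powr (3 + c)"
    unfolding c_def by simp
  also have "\<dots> = y powr 3 * y powr c"
    by (rule powr_add)
  also have "y powr 3 = y ^ 3"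
    using \<open>0 < y\<close> powr_realpow[of y 3] by simp
  finally have eq: "4 powr (3 * ln y - 1) = y ^ 3 * y powr c / 4" .
  have "(4::real) = (4 powr (1 / c)) powr c"
    using \<open>0 < c\<close> by (simp add: powr_powr)
  also have "\<dots> \<le> y powr c"
    using assms(2) \<open>0 < c\<close> unfolding c_def by (intro powr_mono2) auto
  finally have "y ^ 3 * 4 \<le> y ^ 3 * y powr c"
    using \<open>0 < y\<close> by (intro mult_left_mono) auto
  then show ?thesis
    unfolding eq by simp
qed

lemma eventually_large_enough: "eventually large_enough sequentially"
proof -
  have e1: "eventually (\<lambda>n::nat. (ln (real n))^3 + 3 * ln (ln (real n)) + 2 \<le> sqrt (real n)) sequentially"
    by real_asymp
  have e2: "eventually (\<lambda>n::nat. 3 * ln (ln (real n)) + 2 \<le> 8 * ln (real n)) sequentially"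
    by real_asymp
  have e3: "eventually (\<lambda>n::nat. 2 \<le> ln (ln (real n))) sequentially"
    by real_asymp
  have e4: "eventually (\<lambda>n::nat. 1 \<le> ln (real n)) sequentially"
    by (rule eventually_ln_ge)
  have e5: "eventually (\<lambda>n::nat. 4 powr (1 / (3 * ln 4 - 3)) \<le> ln (real n)) sequentially"
    by (rule eventually_ln_ge)
  show ?thesis
    using e1 e2 e3 e4 e5 unfolding large_enough_def by eventually_elim (use cube_le_four_powr in auto)
qed

theorem lemma4p3:
  shows "\<exists>N::nat. \<forall>n\<ge>N. \<forall>(d::nat) (V::nat set) (E::nat set set)
           (S::nat \<Rightarrow> nat list) (e::nat \<Rightarrow> nat set).
    10 \<le> d \<and> real d \<le> 10 * ln (real n) \<and>
    is_graph V E \<and> card V = n \<and>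
    card E \<le> d * n \<and>
    (\<forall>x\<in>V. \<forall>i\<le>n. real (card (sphere V E x i)) \<le> (2 * real d) ^ i * ln (real n)) \<and>
    (\<forall>U\<subseteq>V. real (card U) \<le> sqrt (real n) \<longrightarrow> spans E U \<le> 2 * card U) \<and>
    (\<forall>U\<subseteq>V. real (card U) \<le> 10 * ln (ln (real n)) \<longrightarrow> spans E U \<le> card U) \<and>
    (\<forall>V' E'. subgraph V' E' V E \<and> min_deg_ge V' E' 10 \<longrightarrow>
       (\<forall>x\<in>V'. \<forall>i::nat. 1 \<le> i \<and> real i \<le> 10 * ln (ln (real n)) \<longrightarrow>
          2 ^ i \<le> card (sphere V' E' x i))) \<and>
    (\<forall>X Y. X \<subseteq> V \<and> Y \<subseteq> E \<and> real (card X + card Y) \<le> 20 * real d * ln (real n) \<longrightarrow>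
       (\<forall>x\<in>V - X. \<forall>y\<in>V - X.
          (ln (real n)) ^ 3 \<le> real (card (ball (V - X) {f \<in> E - Y. f \<subseteq> V - X} x (lpar n))) \<and>
          (ln (real n)) ^ 3 \<le> real (card (ball (V - X) {f \<in> E - Y. f \<subseteq> V - X} y (lpar n))) \<longrightarrow>
          (\<exists>p. is_path (V - X) {f \<in> E - Y. f \<subseteq> V - X} p \<and> hd p = x \<and> last p = y \<and>
               real (plen p) \<le> 2 * ln (real n)))) \<and>
    (\<forall>i<d. is_path (core_vertices V E 15) (induced E (core_vertices V E 15)) (S i) \<and>
             plen (S i) \<le> d) \<and>
    (\<forall>i<d. \<forall>j<d. i \<noteq> j \<longrightarrow> set (S i) \<inter> set (S j) = {}) \<and>
    (\<forall>i<d. \<forall>j<d. i \<noteq> j \<longrightarrow> (\<forall>x\<in>set (S i). \<forall>y\<in>set (S j).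
         ball V E x (lpar n) \<inter> ball V E y (lpar n) = {})) \<and>
    (\<forall>i<d. e i \<in> path_edges (S i))
    \<longrightarrow> (\<exists>P. is_path V E P \<and> e ` {..<d} \<subseteq> path_edges P \<and>
            path_edges P \<inter> (\<Union>i<d. path_edges (S i)) \<subseteq> e ` {..<d})"
proof -
  obtain N where N: "\<And>n. N \<le> n \<Longrightarrow> large_enough n"
    using eventually_large_enough unfolding eventually_sequentially by blast
  show ?thesis
  proof (intro exI[of _ N] allI impI, elim conjE, goal_cases)
    case (1 n d V E S e)
    interpret lemma4p3_setting n d V E S e
    proof unfold_locales
      show "0 < d"
        using 1 by linarith
    qed (fact 1 N[OF 1(1)])+
    show ?case
      by (rule path_through_chosen_edges)
  qed
qed

end
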